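(* For any nonempty configuration and any integer shift $G$, the inter-level sampler (Algorithm 1) terminates with probability $1$ and returns level $\ell$ with probability exactly $W_\ell/\sum_j W_j$.
   Context: Fix an integer $b\ge 2$. There is a set $\mathcal L$ of $N$ levels, which are consecutive integers. Each level $\ell$ holds a finite (possibly empty) multiset of normalized significands, each an integer in $[2^{b-1},2^b)$. Let $z$ be the total number of stored significands over all levels; assume $z<2^b$. For each level, $SS_\ell$ is the sum of its significands (so $SS_\ell=0$ iff the level is empty); set $SS_\ell=0$ for integers $\ell\notin\mathcal L$. The level weight is $W_\ell=SS_\ell2^\ell$. For an integer global shift $G$, $A_\ell(G)=\lfloor W_\ell2^G\rfloor+1$ if $SS_\ell>0$ and $A_\ell(G)=0$ if $SS_\ell=0$; $A(G)=\sum_\ell A_\ell(G)$ and $M(G)=\sum_\ell W_\ell2^G$. The configuration is nonempty if $z\ge1$. Inter-level sampler (Algorithm 1), with shift $G$ and $A=A(G)$: it performs independent outer iterations. In an outer iteration, draw $x$ uniformly from $\{1,\dots,A\}$ and scan the levels in decreasing order starting from the largest nonempty level. At the current level $\ell$: if $x<A_\ell(G)$, return $\ell$; if $x=A_\ell(G)$, run the refinement loop for $m=1,2,\dots$: draw $r$ uniformly from $\{0,\dots,2^b-1\}$ independently, let $t=\lfloor SS_\ell 2^{\ell+G+mb}\rfloor \bmod 2^b$; if $r<t$ return $\ell$; else if $r>t$ or $\ell+G+mb\ge 0$, abandon this outer iteration and start a new one; otherwise continue with $m+1$. If $x>A_\ell(G)$, set $x\leftarrow x-A_\ell(G)$ and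 move to the next lower level. *)

theory Defs
  imports "HOL-Probability.Probability"
begin

text \<open>A configuration: levels form the integer interval L = {lo..hi}; level l holds the
 multiset S l of normalized significands. Only the values of S on L matter.\<close>

definition SS :: "int \<Rightarrow> int \<Rightarrow> (int \<Rightarrow> nat multiset) \<Rightarrow> int \<Rightarrow> nat" where
  "SS lo hi S l = (if l \<in> {lo..hi} then sum_mset (S l) else 0)"

definition W :: "int \<Rightarrow> int \<Rightarrow> (int \<Rightarrow> nat multiset) \<Rightarrow> int \<Rightarrow> real" where
  "W lo hi S l = real (SS lo hi S l) * 2 powr real_of_int l"

definition Alev :: "int \<Rightarrow> int \<Rightarrow> (int \<Rightarrow> nat multiset) \<Rightarrow> int \<Rightarrow> int \<Rightarrow> int" where
  "Alev lo hi S G l = (if SS lo hi S l > 0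
      then \<lfloor>W lo hi S l * 2 powr real_of_int G\<rfloor> + 1 else 0)"

definition Atot :: "int \<Rightarrow> int \<Rightarrow> (int \<Rightarrow> nat multiset) \<Rightarrow> int \<Rightarrow> int" where
  "Atot lo hi S G = (\<Sum>l\<in>{lo..hi}. Alev lo hi S G l)"

definition top_level :: "int \<Rightarrow> int \<Rightarrow> (int \<Rightarrow> nat multiset) \<Rightarrow> int" where
  "top_level lo hi S = Max {l \<in> {lo..hi}. SS lo hi S l > 0}"

text \<open>Deterministic scan of one outer iteration over the levels (given in decreasing order).
 Result Some (l, False): return l; Some (l, True): run refinement at l.\<close>
fun scan :: "(int \<Rightarrow> int) \<Rightarrow> int list \<Rightarrow> int \<Rightarrow> (int \<times> bool) option" where
  "scan A [] x = None"
| "scan A (l # ls) x =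
     (if x < A l then Some (l, False)
      else if x = A l then Some (l, True)
      else scan A ls (x - A l))"

text \<open>Refinement loop at level l with sum SSl; Some l = return l, None = abandon the
 outer iteration.\<close>
partial_function (spmf) refine :: "nat \<Rightarrow> nat \<Rightarrow> int \<Rightarrow> int \<Rightarrow> nat \<Rightarrow> int option spmf" where
  "refine b SSl l G m =
     do { r \<leftarrow> spmf_of_set {0..<(2::nat)^b};
          let e = l + G + int m * int b;
          let t = nat (\<lfloor>real SSl * 2 powr real_of_int e\<rfloor> mod 2^b);
          if r < t then return_spmf (Some l)
          else if r > t \<or> e \<ge> 0 then return_spmf None
          else refine b SSl l G (Suc m) }"

text \<open>One outer iteration after drawing x. The case scan = None cannot occur for
 1 \<le> x \<le> A; it is modelled as divergence (no probability mass).\<close>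
definition iteration :: "nat \<Rightarrow> int \<Rightarrow> int \<Rightarrow> (int \<Rightarrow> nat multiset) \<Rightarrow> int \<Rightarrow> int \<Rightarrow> int option spmf" where
  "iteration b lo hi S G x =
     (case scan (Alev lo hi S G) (rev [lo..top_level lo hi S]) x of
        None \<Rightarrow> return_pmf None
      | Some (l, False) \<Rightarrow> return_spmf (Some l)
      | Some (l, True) \<Rightarrow> refine b (SS lo hi S l) l G 1)"

partial_function (spmf) sampler :: "nat \<Rightarrow> int \<Rightarrow> int \<Rightarrow> (int \<Rightarrow> nat multiset) \<Rightarrow> int \<Rightarrow> int spmf" where
  "sampler b lo hi S G =
     do { x \<leftarrow> spmf_of_set {1..Atot lo hi S G};
          res \<leftarrow> iteration b lo hi S G x;
          (case res of Some l \<Rightarrow> return_spmf l | None \<Rightarrow> sampler b lo hi S G) }"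

end

theory Submission
  imports Defs
begin

text \<open>Level l owns A_l consecutive values of x:
  A_l - 1 = \<lfloor>W_l 2^G\<rfloor> of them return l at once and the last one starts the refinement loop,
  which compares a uniform random number digit by digit with the base-2^b expansion of
  frac (W_l 2^G) and so returns l with probability exactly that fractional part. Hence an
  iteration returns l with probability W_l 2^G / A and fails with probability
  1 - (\<Sum>_j W_j) 2^G / A < 1. The sampler repeats failed iterations, so it terminates almost
  surely and returns l with the conditional probability W_l / \<Sum>_j W_j.\<close>

lemma sum_lessThan_trichotomy:
  fixes a c d :: real
  assumes "t < N"
  shows "(\<Sum>r<N. if r < t then a else if t < r then c else d) = real t * a + real (N - Suc t) * c + d"
  using assms
proof (induction N)
  case (Suc N)
  show ?case
  proof (cases "t < N")
    case True
    with Suc show ?thesis by (simp add: Suc_diff_Suc algebra_simps)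
  next
    case False
    with Suc have "t = N" by simp
    moreover have "(\<Sum>r<N. if r < N then a else if N < r then c else d) = real N * a" by simp
    ultimately show ?thesis by simp
  qed
qed simp

lemma frac_divide_int:
  fixes z :: real and N :: int
  assumes "N > 0"
  shows "frac (z / N) = (real_of_int (\<lfloor>z\<rfloor> mod N) + frac z) / N"
proof -
  have "real_of_int \<lfloor>z\<rfloor> = real_of_int (\<lfloor>z\<rfloor> div N) * N + real_of_int (\<lfloor>z\<rfloor> mod N)"
    by (metis div_mult_mod_eq of_int_add of_int_mult)
  then have "z / N = real_of_int (\<lfloor>z\<rfloor> div N) + (real_of_int (\<lfloor>z\<rfloor> mod N) + frac z) / N"
    using assms by (simp add: frac_def field_simps)
  moreover have "0 \<le> real_of_int (\<lfloor>z\<rfloor> mod N) + frac z" "real_of_int (\<lfloor>z\<rfloor> mod N) + frac z < N"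
    using assms pos_mod_bound[of N "\<lfloor>z\<rfloor>"] frac_lt_1[of z] by (auto simp del: pos_mod_bound)
  ultimately show ?thesis
    using assms by (simp add: frac_unique_iff)
qed

lemma frac_of_nat_mult_powr_nonneg:
  assumes "e \<ge> 0"
  shows "frac (real n * 2 powr real_of_int e) = 0"
proof -
  have "2 powr real_of_int e = 2 ^ nat e"
    using assms by (simp add: powr_realpow[symmetric])
  then have "real n * 2 powr real_of_int e = of_int (int n * 2 ^ nat e)"
    by simp
  then show ?thesis
    by (metis Ints_of_int frac_eq_0_iff)
qed

lemma retry_loop_spmf:
  fixes q :: "'a option spmf" and p :: "'a spmf"
  assumes loop: "p = q \<bind> (\<lambda>res. case res of None \<Rightarrow> p | Some x \<Rightarrow> return_spmf x)"
    and q: "lossless_spmf q" and fail: "spmf q None < 1"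
  shows "lossless_spmf p" and "spmf p x = spmf q (Some x) / (1 - spmf q None)"
proof -
  have integrable: "integrable (measure_spmf q) (indicator A :: _ \<Rightarrow> real)" for A
    by (rule measure_spmf.integrable_const_bound[where B=1]) (auto simp: indicator_def)
  have "weight_spmf p = (LINT res|measure_spmf q. weight_spmf (case res of None \<Rightarrow> p | Some x \<Rightarrow> return_spmf x))"
    using arg_cong[OF loop, of weight_spmf] by (simp only: weight_bind_spmf o_def)
  also have "\<dots> = (LINT res|measure_spmf q. 1 + (weight_spmf p - 1) * indicator {None} res)"
    by (rule Bochner_Integration.integral_cong) (auto split: option.split)
  finally have "weight_spmf p = 1 + (weight_spmf p - 1) * spmf q None"
    using q by (simp add: integrable spmf_conv_measure_spmf lossless_spmf_def weight_spmf_def)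
  then have "(weight_spmf p - 1) * (1 - spmf q None) = 0"
    by (simp add: algebra_simps)
  then show "lossless_spmf p"
    using fail unfolding lossless_spmf_def by simp
  have "spmf p x = (LINT res|measure_spmf q. spmf (case res of None \<Rightarrow> p | Some y \<Rightarrow> return_spmf y) x)"
    using arg_cong[OF loop, of "\<lambda>p. spmf p x"] by (simp only: spmf_bind)
  also have "\<dots> = (LINT res|measure_spmf q. indicator {Some x} res + spmf p x * indicator {None} res)"
    by (rule Bochner_Integration.integral_cong) (auto split: option.split)
  finally have "spmf p x = spmf q (Some x) + spmf p x * spmf q None"
    by (simp add: integrable spmf_conv_measure_spmf)
  then show "spmf p x = spmf q (Some x) / (1 - spmf q None)"
    using fail by (simp add: field_simps)
qed

lemma scan_not_None:
  assumes "\<forall>l\<in>set ls. A l \<ge> 0" "1 \<le> x" "x \<le> sum_list (map A ls)"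
  shows "scan A ls x \<noteq> None"
  using assms by (induction ls arbitrary: x) auto

lemma sum_scan:
  fixes h :: "(int \<times> bool) option \<Rightarrow> real"
  assumes "distinct ls" "\<forall>l\<in>set ls. A l \<ge> 0"
  shows "(\<Sum>x\<in>{1..sum_list (map A ls)}. h (scan A ls x)) =
     (\<Sum>l\<in>set ls. if A l \<ge> 1 then real_of_int (A l - 1) * h (Some (l, False)) + h (Some (l, True)) else 0)"
  using assms
proof (induction ls)
  case (Cons l0 ls)
  define a where "a = A l0"
  define s where "s = sum_list (map A ls)"
  have "a \<ge> 0" "s \<ge> 0"
    using Cons.prems unfolding a_def s_def by (auto intro!: sum_list_nonneg)
  then have "{1..a + s} = {1..a} \<union> {a + 1..a + s}"
    by auto
  then have "(\<Sum>x\<in>{1..a + s}. h (scan A (l0 # ls) x)) =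
      (\<Sum>x\<in>{1..a}. h (scan A (l0 # ls) x)) + (\<Sum>x\<in>{a + 1..a + s}. h (scan A (l0 # ls) x))"
    by (simp add: sum.union_disjoint)
  also have "(\<Sum>x\<in>{a + 1..a + s}. h (scan A (l0 # ls) x)) = (\<Sum>x\<in>{1..s}. h (scan A ls x))"
    by (rule sum.reindex_bij_witness[of _ "\<lambda>x. x + a" "\<lambda>x. x - a"]) (auto simp: a_def)
  also have "(\<Sum>x\<in>{1..a}. h (scan A (l0 # ls) x)) =
      (if a \<ge> 1 then real_of_int (a - 1) * h (Some (l0, False)) + h (Some (l0, True)) else 0)"
  proof (cases "a \<ge> 1")
    case True
    then have "{1..a} = insert a {1..a - 1}"
      by auto
    moreover have "(\<Sum>x\<in>{1..a - 1}. h (scan A (l0 # ls) x)) = (\<Sum>x\<in>{1..a - 1}. h (Some (l0, False)))"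
      by (rule sum.cong) (auto simp: a_def)
    ultimately show ?thesis
      using True by (simp add: a_def)
  qed (use \<open>a \<ge> 0\<close> in simp)
  finally show ?case
    using Cons by (simp add: a_def s_def)
qed simp

lemma refine_step:
  fixes b n k :: nat and l G :: int
  defines "e \<equiv> l + G + int (Suc k) * int b"
    and "t \<equiv> nat (\<lfloor>real n * 2 powr real_of_int (l + G + int (Suc k) * int b)\<rfloor> mod 2^b)"
  shows "spmf (refine b n l G (Suc k)) x =
    (real t * spmf (return_spmf (Some l)) x + real (2^b - Suc t) * spmf (return_spmf None) x
      + spmf (if 0 \<le> e then return_spmf None else refine b n l G (Suc (Suc k))) x) / 2^b"
    and "0 \<le> e \<or> lossless_spmf (refine b n l G (Suc (Suc k))) \<Longrightarrow> lossless_spmf (refine b n l G (Suc k))"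
proof -
  have t: "t < 2^b"
    unfolding t_def by (simp add: nat_less_iff)
  have eq: "refine b n l G (Suc k) = spmf_of_set {0..<2^b} \<bind> (\<lambda>r. if r < t then return_spmf (Some l)
      else if t < r \<or> 0 \<le> e then return_spmf None else refine b n l G (Suc (Suc k)))"
    by (subst refine.simps) (simp only: Let_def e_def t_def)
  then have "spmf (refine b n l G (Suc k)) x =
      (\<Sum>r\<in>{0..<2^b}. spmf (if r < t then return_spmf (Some l) else if t < r \<or> 0 \<le> e then return_spmf None
         else refine b n l G (Suc (Suc k))) x) / 2^b"
    by (simp add: spmf_bind integral_spmf_of_set)
  also have "(\<Sum>r\<in>{0..<2^b}. spmf (if r < t then return_spmf (Some l) else if t < r \<or> 0 \<le> e then return_spmf None
         else refine b n l G (Suc (Suc k))) x) =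
      (\<Sum>r<2^b. if r < t then spmf (return_spmf (Some l)) x else if t < r then spmf (return_spmf None) x
         else spmf (if 0 \<le> e then return_spmf None else refine b n l G (Suc (Suc k))) x)"
    by (rule sum.cong) auto
  also have "\<dots> = real t * spmf (return_spmf (Some l)) x + real (2^b - Suc t) * spmf (return_spmf None) x
      + spmf (if 0 \<le> e then return_spmf None else refine b n l G (Suc (Suc k))) x"
    using t by (rule sum_lessThan_trichotomy)
  finally show "spmf (refine b n l G (Suc k)) x =
    (real t * spmf (return_spmf (Some l)) x + real (2^b - Suc t) * spmf (return_spmf None) x
      + spmf (if 0 \<le> e then return_spmf None else refine b n l G (Suc (Suc k))) x) / 2^b"
    by simp
  show "0 \<le> e \<or> lossless_spmf (refine b n l G (Suc (Suc k))) \<Longrightarrow> lossless_spmf (refine b n l G (Suc k))"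
    unfolding eq by auto
qed

text \<open>Round Suc k compares a uniform digit with the leading base-2^b digit of frac (n 2^(l+G+kb));
  the loop stops at the first differing digit or once all remaining digits vanish (e \<ge> 0).\<close>

lemma refine_distribution:
  fixes b n k :: nat and l G :: int
  assumes "b \<ge> 1"
  shows "lossless_spmf (refine b n l G (Suc k)) \<and>
    spmf (refine b n l G (Suc k)) None = 1 - frac (real n * 2 powr real_of_int (l + G + int k * int b)) \<and>
    (\<forall>j. spmf (refine b n l G (Suc k)) (Some j) =
       (if j = l then frac (real n * 2 powr real_of_int (l + G + int k * int b)) else 0))"
proof (induction "nat (- (l + G + int (Suc k) * int b))" arbitrary: k rule: less_induct)
  case less
  define e where "e = l + G + int (Suc k) * int b"
  define z where "z = real n * 2 powr real_of_int e"
  define t where "t = nat (\<lfloor>z\<rfloor> mod 2^b)"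
  define R where "R = (if 0 \<le> e then return_spmf None else refine b n l G (Suc (Suc k)))"
  have step: "spmf (refine b n l G (Suc k)) x =
      (real t * spmf (return_spmf (Some l)) x + real (2^b - Suc t) * spmf (return_spmf None) x
        + spmf R x) / 2^b" for x
    unfolding t_def z_def R_def e_def by (rule refine_step(1))
  have "t < 2^b"
    unfolding t_def by (simp add: nat_less_iff)
  have R: "lossless_spmf R \<and> spmf R None = 1 - frac z \<and> (\<forall>j. spmf R (Some j) = (if j = l then frac z else 0))"
  proof (cases "0 \<le> e")
    case True
    then show ?thesis
      unfolding R_def z_def by (simp add: frac_of_nat_mult_powr_nonneg)
  next
    case False
    then have "nat (- (l + G + int (Suc (Suc k)) * int b)) < nat (- (l + G + int (Suc k) * int b))"
      using assms unfolding e_def by (simp add: algebra_simps)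
    from less[OF this] False show ?thesis
      unfolding R_def z_def e_def by simp
  qed
  have digit: "frac (real n * 2 powr real_of_int (l + G + int k * int b)) = (real t + frac z) / 2^b"
  proof -
    have "real n * 2 powr real_of_int (l + G + int k * int b) = z / real_of_int (2^b)"
      unfolding z_def e_def by (simp add: algebra_simps powr_add powr_realpow)
    then show ?thesis
      using frac_divide_int[of "2^b" z] unfolding t_def by simp
  qed
  have "lossless_spmf (refine b n l G (Suc k))"
    using R refine_step(2)[of l G k b n] unfolding R_def e_def by (auto split: if_splits)
  moreover have "spmf (refine b n l G (Suc k)) None = 1 - (real t + frac z) / 2^b"
    using step[of None] R \<open>t < 2^b\<close> by (simp add: field_simps)
  moreover have "spmf (refine b n l G (Suc k)) (Some j) = (if j = l then (real t + frac z) / 2^b else 0)" for j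
    using step[of "Some j"] R by (simp add: add_divide_distrib)
  ultimately show ?case
    using digit by simp
qed

lemma W_nonneg: "0 \<le> W lo hi S l"
  by (simp add: W_def)

lemma W_eq_0_if_SS_eq_0: "SS lo hi S l = 0 \<Longrightarrow> W lo hi S l = 0"
  by (simp add: W_def)

lemma
  assumes "\<exists>l\<in>{lo..hi}. 0 < SS lo hi S l"
  shows top_level_in_levels: "top_level lo hi S \<in> {lo..hi}"
    and SS_top_level_pos: "0 < SS lo hi S (top_level lo hi S)"
    and SS_eq_0_above_top_level: "l \<notin> {lo..top_level lo hi S} \<Longrightarrow> SS lo hi S l = 0"
proof -
  define NE where "NE = {l \<in> {lo..hi}. 0 < SS lo hi S l}"
  have "finite NE" "NE \<noteq> {}"
    using assms unfolding NE_def by (auto intro: finite_subset[of _ "{lo..hi}"])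
  then have "top_level lo hi S \<in> NE" and top_ge: "\<And>l. l \<in> NE \<Longrightarrow> l \<le> top_level lo hi S"
    unfolding top_level_def NE_def[symmetric] by auto
  then show "top_level lo hi S \<in> {lo..hi}" "0 < SS lo hi S (top_level lo hi S)"
    unfolding NE_def by auto
  show "SS lo hi S l = 0" if "l \<notin> {lo..top_level lo hi S}"
  proof (cases "l \<in> {lo..hi}")
    case True
    with that top_ge have "l \<notin> NE"
      by fastforce
    with True show ?thesis
      unfolding NE_def by simp
  qed (auto simp: SS_def)
qed

lemma Alev_nonneg: "0 \<le> Alev lo hi S G l"
  using W_nonneg[of lo hi S l] by (simp add: Alev_def)

lemma one_le_Alev_iff: "1 \<le> Alev lo hi S G l \<longleftrightarrow> 0 < SS lo hi S l"
  using W_nonneg[of lo hi S l] by (simp add: Alev_def)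

lemma Alev_floor_frac:
  assumes "0 < SS lo hi S l"
  shows "real_of_int (Alev lo hi S G l - 1) + frac (real (SS lo hi S l) * 2 powr real_of_int (l + G)) =
    W lo hi S l * 2 powr real_of_int G"
proof -
  have "W lo hi S l * 2 powr real_of_int G = real (SS lo hi S l) * 2 powr real_of_int (l + G)"
    by (simp add: W_def powr_add)
  then show ?thesis
    using assms by (simp add: Alev_def frac_def)
qed

lemma sum_Alev_top_level:
  assumes "\<exists>l\<in>{lo..hi}. 0 < SS lo hi S l"
  shows "(\<Sum>l\<in>{lo..top_level lo hi S}. Alev lo hi S G l) = Atot lo hi S G"
  unfolding Atot_def using top_level_in_levels[OF assms] SS_eq_0_above_top_level[OF assms]
  by (intro sum.mono_neutral_left) (auto simp: Alev_def)

lemma sum_W_top_level: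
  assumes "\<exists>l\<in>{lo..hi}. 0 < SS lo hi S l"
  shows "(\<Sum>l\<in>{lo..top_level lo hi S}. W lo hi S l) = (\<Sum>l\<in>{lo..hi}. W lo hi S l)"
  using top_level_in_levels[OF assms] SS_eq_0_above_top_level[OF assms]
  by (intro sum.mono_neutral_left) (auto simp: W_eq_0_if_SS_eq_0)

lemma one_le_Atot:
  assumes "\<exists>l\<in>{lo..hi}. 0 < SS lo hi S l"
  shows "1 \<le> Atot lo hi S G"
proof -
  have "1 \<le> Alev lo hi S G (top_level lo hi S)"
    using SS_top_level_pos[OF assms] by (simp add: one_le_Alev_iff)
  also have "\<dots> \<le> Atot lo hi S G"
    unfolding Atot_def using top_level_in_levels[OF assms]
    by (intro member_le_sum) (auto simp: Alev_nonneg)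
  finally show ?thesis .
qed

lemma sum_W_pos:
  assumes "\<exists>l\<in>{lo..hi}. 0 < SS lo hi S l"
  shows "0 < (\<Sum>l\<in>{lo..hi}. W lo hi S l)"
proof -
  obtain l where "l \<in> {lo..hi}" "0 < SS lo hi S l"
    using assms by blast
  then have "0 < W lo hi S l"
    by (simp add: W_def)
  also have "\<dots> \<le> (\<Sum>l\<in>{lo..hi}. W lo hi S l)"
    using \<open>l \<in> {lo..hi}\<close> by (intro member_le_sum) (auto simp: W_nonneg)
  finally show ?thesis .
qed

lemma exists_nonempty_level:
  assumes "\<forall>l\<in>{lo..hi}. \<forall>s\<in>#S l. 0 < s" and "1 \<le> (\<Sum>l\<in>{lo..hi}. size (S l))"
  shows "\<exists>l\<in>{lo..hi}. 0 < SS lo hi S l"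
proof -
  have "(\<Sum>l\<in>{lo..hi}. size (S l)) \<noteq> 0"
    using assms(2) by linarith
  then obtain l s where "l \<in> {lo..hi}" "s \<in># S l"
    by auto
  then have "0 < s"
    using assms(1) by blast
  also have "s \<le> sum_mset (S l)"
    using \<open>s \<in># S l\<close> by (simp add: sum_mset.remove)
  finally show ?thesis
    using \<open>l \<in> {lo..hi}\<close> by (auto simp: SS_def)
qed

definition scan_outcome :: "nat \<Rightarrow> int \<Rightarrow> int \<Rightarrow> (int \<Rightarrow> nat multiset) \<Rightarrow> int \<Rightarrow> (int \<times> bool) option \<Rightarrow> int option spmf"
  where "scan_outcome b lo hi S G res =
    (case res of
      None \<Rightarrow> return_pmf None
    | Some (l, False) \<Rightarrow> return_spmf (Some l)
    | Some (l, True) \<Rightarrow> refine b (SS lo hi S l) l G 1)"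

lemma iteration_eq_scan_outcome:
  "iteration b lo hi S G x = scan_outcome b lo hi S G (scan (Alev lo hi S G) (rev [lo..top_level lo hi S]) x)"
  by (simp add: iteration_def scan_outcome_def)

lemma scan_outcome_level_mass:
  assumes "b \<ge> 1"
  shows "(if 1 \<le> Alev lo hi S G l
      then real_of_int (Alev lo hi S G l - 1) * spmf (scan_outcome b lo hi S G (Some (l, False))) y
        + spmf (scan_outcome b lo hi S G (Some (l, True))) y
      else 0) =
    (case y of
      None \<Rightarrow> real_of_int (Alev lo hi S G l) - W lo hi S l * 2 powr real_of_int G
    | Some j \<Rightarrow> if j = l then W lo hi S l * 2 powr real_of_int G else 0)"
proof (cases "0 < SS lo hi S l")
  case True
  have "lossless_spmf (refine b (SS lo hi S l) l G 1) \<and>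
    spmf (refine b (SS lo hi S l) l G 1) None = 1 - frac (real (SS lo hi S l) * 2 powr real_of_int (l + G)) \<and>
    (\<forall>j. spmf (refine b (SS lo hi S l) l G 1) (Some j) =
       (if j = l then frac (real (SS lo hi S l) * 2 powr real_of_int (l + G)) else 0))"
    using refine_distribution[OF assms, of "SS lo hi S l" l G 0] by simp
  then show ?thesis
    using True Alev_floor_frac[OF True, of G, symmetric]
    by (cases y) (auto simp: scan_outcome_def one_le_Alev_iff algebra_simps)
next
  case False
  then show ?thesis
    by (cases y) (simp_all add: one_le_Alev_iff W_eq_0_if_SS_eq_0 Alev_def)
qed

lemma spmf_outer_iteration:
  assumes "b \<ge> 1" and nonempty: "\<exists>l\<in>{lo..hi}. 0 < SS lo hi S l"
  shows "spmf (spmf_of_set {1..Atot lo hi S G} \<bind> iteration b lo hi S G) y =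
    (case y of
      None \<Rightarrow> 1 - (\<Sum>l\<in>{lo..hi}. W lo hi S l) * 2 powr real_of_int G / Atot lo hi S G
    | Some j \<Rightarrow> W lo hi S j * 2 powr real_of_int G / Atot lo hi S G)"
proof -
  let ?A = "Alev lo hi S G" and ?top = "top_level lo hi S"
  have "spmf (spmf_of_set {1..Atot lo hi S G} \<bind> iteration b lo hi S G) y =
      (\<Sum>x\<in>{1..Atot lo hi S G}. spmf (scan_outcome b lo hi S G (scan ?A (rev [lo..?top]) x)) y) / Atot lo hi S G"
    using one_le_Atot[OF nonempty, where G=G] by (simp add: spmf_bind integral_spmf_of_set iteration_eq_scan_outcome)
  also have "(\<Sum>x\<in>{1..Atot lo hi S G}. spmf (scan_outcome b lo hi S G (scan ?A (rev [lo..?top]) x)) y) =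
      (\<Sum>l\<in>{lo..?top}. case y of
        None \<Rightarrow> real_of_int (?A l) - W lo hi S l * 2 powr real_of_int G
      | Some j \<Rightarrow> if j = l then W lo hi S l * 2 powr real_of_int G else 0)"
    using sum_scan[of "rev [lo..?top]" ?A "\<lambda>res. spmf (scan_outcome b lo hi S G res) y"]
    by (simp add: sum_list_distinct_conv_sum_set Alev_nonneg sum_Alev_top_level[OF nonempty]
        scan_outcome_level_mass[OF assms(1)])
  also have "\<dots> = (case y of
        None \<Rightarrow> Atot lo hi S G - (\<Sum>l\<in>{lo..hi}. W lo hi S l) * 2 powr real_of_int G
      | Some j \<Rightarrow> W lo hi S j * 2 powr real_of_int G)"
    using SS_eq_0_above_top_level[OF nonempty]
    by (cases y) (auto simp: sum_subtractf sum_distrib_right sum_Alev_top_level[OF nonempty, symmetric]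
        sum_W_top_level[OF nonempty, symmetric] W_eq_0_if_SS_eq_0)
  finally show ?thesis
    using one_le_Atot[OF nonempty, where G=G] by (cases y) (simp_all add: diff_divide_distrib)
qed

lemma lossless_outer_iteration:
  assumes "b \<ge> 1" and nonempty: "\<exists>l\<in>{lo..hi}. 0 < SS lo hi S l"
  shows "lossless_spmf (spmf_of_set {1..Atot lo hi S G} \<bind> iteration b lo hi S G)"
proof (subst lossless_bind_spmf, intro conjI ballI)
  show "lossless_spmf (spmf_of_set {1..Atot lo hi S G})"
    using one_le_Atot[OF nonempty, where G=G] by simp
  fix x
  assume "x \<in> set_spmf (spmf_of_set {1..Atot lo hi S G})"
  then have "scan (Alev lo hi S G) (rev [lo..top_level lo hi S]) x \<noteq> None"
    using one_le_Atot[OF nonempty, where G=G]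
    by (intro scan_not_None) (auto simp: Alev_nonneg sum_list_distinct_conv_sum_set sum_Alev_top_level[OF nonempty])
  then show "lossless_spmf (iteration b lo hi S G x)"
    using refine_distribution[OF assms(1), of _ _ G 0]
    by (auto simp: iteration_eq_scan_outcome scan_outcome_def split: option.split bool.split)
qed

lemma sampler_retry_loop:
  "sampler b lo hi S G = (spmf_of_set {1..Atot lo hi S G} \<bind> iteration b lo hi S G) \<bind>
    (\<lambda>res. case res of None \<Rightarrow> sampler b lo hi S G | Some l \<Rightarrow> return_spmf l)"
  by (subst sampler.simps) simp

theorem mainTheorem3:
  fixes b :: nat and lo hi G :: int and S :: "int \<Rightarrow> nat multiset"
  assumes "b \<ge> 2"
    and "\<forall>l\<in>{lo..hi}. \<forall>s\<in>#S l. 2^(b-1) \<le> s \<and> s < 2^b"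
    and "(\<Sum>l\<in>{lo..hi}. size (S l)) < 2^b"
    and "(\<Sum>l\<in>{lo..hi}. size (S l)) \<ge> 1"
  shows "lossless_spmf (sampler b lo hi S G) \<and>
         (\<forall>l. spmf (sampler b lo hi S G) l = W lo hi S l / (\<Sum>j\<in>{lo..hi}. W lo hi S j))"
proof -
  have b: "b \<ge> 1"
    using assms(1) by simp
  have "0 < s" if "l \<in> {lo..hi}" "s \<in># S l" for l s
    using assms(2) that by (meson order.strict_trans2 pos2 zero_less_power)
  then have nonempty: "\<exists>l\<in>{lo..hi}. 0 < SS lo hi S l"
    using assms(4) by (intro exists_nonempty_level) auto
  define q where "q = spmf_of_set {1..Atot lo hi S G} \<bind> iteration b lo hi S G"
  have fail: "spmf q None = 1 - (\<Sum>j\<in>{lo..hi}. W lo hi S j) * 2 powr real_of_int G / Atot lo hi S G"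
    unfolding q_def by (simp add: spmf_outer_iteration[OF b nonempty])
  have "spmf q None < 1"
    unfolding fail using sum_W_pos[OF nonempty] one_le_Atot[OF nonempty, where G=G] by simp
  note loop = retry_loop_spmf[OF sampler_retry_loop[of b lo hi S G, folded q_def]
    lossless_outer_iteration[OF b nonempty, of G, folded q_def] this]
  have "spmf (sampler b lo hi S G) l = W lo hi S l / (\<Sum>j\<in>{lo..hi}. W lo hi S j)" for l
  proof -
    have "spmf q (Some l) = W lo hi S l * 2 powr real_of_int G / Atot lo hi S G"
      unfolding q_def by (simp add: spmf_outer_iteration[OF b nonempty])
    then show ?thesis
      unfolding loop(2) fail using one_le_Atot[OF nonempty, where G=G] by simp
  qed
  with loop(1) show ?thesis
    by blast
qed

end
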